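(* Write $v(m,n)=v^{11}(m,n)$. For every $m\in\mathbb Z_{>0}$ and $\nu\in\mathbb Z_{\ge 0}$, in $M_r$ we have $$v(m,m)\,v(-m,-m)^{\nu}\mathbf 1=2m^2\nu(r+2\nu-2)\,v(-m,-m)^{\nu-1}\mathbf 1$$ (for $\nu=0$ both sides are $0$).
   Context: Fix an integer $d\ge 2$ and $r\in\mathbb{C}$. Let $\hat{\mathfrak h}$ be the complex Lie algebra with basis $\{v^i(m)\mid 1\le i\le d,\ m\in\mathbb{Z}\}\cup\{\mathbf c\}$ and bracket $[v^i(m),v^j(n)]=\delta_{m+n,0}\delta_{i,j}\,m\,\mathbf c$, $[\mathbf c,\hat{\mathfrak h}]=0$. In $A=U(\hat{\mathfrak h})/\langle \mathbf c-1\rangle$ let $v^{ij}(m,n)$ be the image of $v^i(m)v^j(n)$; then $v^{ij}(m,n)=v^{ji}(n,m)$ unless $i=j$ and $m=-n$, and $v^{ii}(m,-m)=v^{ii}(-m,m)+m$. Let $\mathcal B=\{v^{ii}(m,n)\mid 1\le i\le d,\ m\le n\}\cup\{v^{ij}(m,n)\mid 1\le i<j\le d,\ m,n\in\mathbb Z\}$; then $\mathcal B\cup\{1\}$ is linearly independent, $\mathcal L:=\mathrm{span}_{\mathbb C}\mathcal B\oplus\mathbb C\subset A$ contains every $v^{ij}(m,n)$ and is closed under $[x,y]=xy-yx$. With $\pi_1,\pi_2$ the projections of $\mathcal L$ onto $\mathrm{span}\,\mathcal B$ and onto $\mathbb C$, $[x,y]_r=\pi_1([x,y])+r\pi_2([x,y])$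 is a Lie bracket on $\mathcal L$; call this Lie algebra $\mathcal L_r$. Let $\mathcal B_+=\{v^{ij}(m,n)\in\mathcal B\mid m\ge 0\text{ or }n\ge 0\}$, $\mathcal L_r^+=\mathrm{span}\,\mathcal B_+\oplus\mathbb C$, and $M_r=U(\mathcal L_r)\otimes_{U(\mathcal L_r^+)}\mathbb C\mathbf 1$, where $\mathcal B_+$ acts by $0$ on $\mathbf 1$ and $s\in\mathbb C\subset\mathcal L_r$ acts by the scalar $s$. *)

theory Defs
  imports Complex_Main
begin

text \<open>Generators of the Lie algebra L_r.  Vb i j m n stands for v^{ij}(m,n);
  Cst stands for the element 1 of the summand C of L_r (NOT the unit of the
  enveloping algebra).\<close>
datatype gen = Vb nat nat int int | Cst

definition inB :: "nat \<Rightarrow> gen \<Rightarrow> bool" where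
  "inB d g = (case g of
      Vb i j m n \<Rightarrow> 1 \<le> i \<and> i \<le> d \<and> 1 \<le> j \<and> j \<le> d \<and> (i < j \<or> (i = j \<and> m \<le> n))
    | Cst \<Rightarrow> False)"

definition inL :: "nat \<Rightarrow> gen \<Rightarrow> bool" where
  "inL d g = (inB d g \<or> g = Cst)"

definition inBplus :: "nat \<Rightarrow> gen \<Rightarrow> bool" where
  "inBplus d g = (inB d g \<and> (case g of Vb i j m n \<Rightarrow> 0 \<le> m \<or> 0 \<le> n | Cst \<Rightarrow> False))"

definition single :: "gen \<Rightarrow> gen \<Rightarrow> complex" where
  "single g = (\<lambda>h. if h = g then 1 else 0)"

text \<open>Coordinates (w.r.t. B \<union> {1}) of the element v^{ij}(m,n) of A, using
  v^{ij}(m,n) = v^{ji}(n,m) unless i=j, m=-n, and v^{ii}(m,-m) = v^{ii}(-m,m) + m.\<close>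
definition vexp :: "nat \<Rightarrow> nat \<Rightarrow> int \<Rightarrow> int \<Rightarrow> gen \<Rightarrow> complex" where
  "vexp i j m n =
     (if i < j then single (Vb i j m n)
      else if j < i then single (Vb j i n m)
      else if m \<le> n then single (Vb i i m n)
      else if m = - n then (\<lambda>h. single (Vb i i n m) h + of_int m * single Cst h)
      else single (Vb i i n m))"

definition dl :: "nat \<Rightarrow> nat \<Rightarrow> int \<Rightarrow> complex" where
  "dl j k s = (if j = k \<and> s = 0 then 1 else 0)"

text \<open>Commutator [a,b] = ab - ba in A of two generators, in coordinates w.r.t.
  B \<union> {1} (the Cst-coordinate is the projection pi_2).  Derived from
  [v^i(m) v^j(n), v^k(p) v^l(q)] = [v^j(n),v^k(p)] v^{il}(m,q) + [v^j(n),v^l(q)] v^{ik}(m,p)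
    + [v^i(m),v^k(p)] v^{lj}(q,n) + [v^i(m),v^l(q)] v^{kj}(p,n).\<close>
definition bracketA :: "gen \<Rightarrow> gen \<Rightarrow> gen \<Rightarrow> complex" where
  "bracketA a b = (case a of Cst \<Rightarrow> (\<lambda>_. 0) | Vb i j m n \<Rightarrow>
     (case b of Cst \<Rightarrow> (\<lambda>_. 0) | Vb k l p q \<Rightarrow>
       (\<lambda>h. dl j k (n + p) * of_int n * vexp i l m q h
          + dl j l (n + q) * of_int n * vexp i k m p h
          + dl i k (m + p) * of_int m * vexp l j q n h
          + dl i l (m + q) * of_int m * vexp k j p n h)))"

definition bracket_r :: "complex \<Rightarrow> gen \<Rightarrow> gen \<Rightarrow> gen \<Rightarrow> complex" where
  "bracket_r r a b = (\<lambda>h. if h = Cst then r * bracketA a b h else bracketA a b h)"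

text \<open>Tensor algebra T(L_r): finitely supported functions on words of generators.\<close>
definition word :: "gen list \<Rightarrow> gen list \<Rightarrow> complex" where
  "word u = (\<lambda>z. if z = u then 1 else 0)"

definition lin :: "(gen \<Rightarrow> complex) \<Rightarrow> gen list \<Rightarrow> complex" where
  "lin x = (\<lambda>z. case z of [g] \<Rightarrow> x g | _ \<Rightarrow> 0)"

definition sand :: "gen list \<Rightarrow> (gen list \<Rightarrow> complex) \<Rightarrow> gen list \<Rightarrow> gen list \<Rightarrow> complex" where
  "sand u X w = (\<lambda>z. if \<exists>y. z = u @ y @ w then X (THE y. z = u @ y @ w) else 0)"

text \<open>Kernel of T(L_r) \<rightarrow> M_r = U(L_r) \<otimes>_{U(L_r^+)} C1, x \<mapsto> x 1:
  the two-sided ideal generated by ab - ba - [a,b]_r plus the left ideal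
  generated by B_+ and by (1_L - 1).\<close>
inductive_set Jr :: "nat \<Rightarrow> complex \<Rightarrow> (gen list \<Rightarrow> complex) set" for d :: nat and r :: complex where
  zero: "(\<lambda>_. 0) \<in> Jr d r"
| add: "X \<in> Jr d r \<Longrightarrow> Y \<in> Jr d r \<Longrightarrow> (\<lambda>z. X z + Y z) \<in> Jr d r"
| smult: "X \<in> Jr d r \<Longrightarrow> (\<lambda>z. c * X z) \<in> Jr d r"
| comm: "list_all (inL d) u \<Longrightarrow> list_all (inL d) w \<Longrightarrow> inL d a \<Longrightarrow> inL d b \<Longrightarrow>
     sand u (\<lambda>z. word [a, b] z - word [b, a] z - lin (bracket_r r a b) z) w \<in> Jr d r"
| ann: "list_all (inL d) u \<Longrightarrow> inBplus d b \<Longrightarrow> sand u (word [b]) [] \<in> Jr d r"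
| cent: "list_all (inL d) u \<Longrightarrow> sand u (\<lambda>z. word [Cst] z - word [] z) [] \<in> Jr d r"

text \<open>Equality in M_r of the images of X 1 and Y 1.\<close>
definition Mr_eq :: "nat \<Rightarrow> complex \<Rightarrow> (gen list \<Rightarrow> complex) \<Rightarrow> (gen list \<Rightarrow> complex) \<Rightarrow> bool" where
  "Mr_eq d r X Y \<longleftrightarrow> (\<lambda>z. X z - Y z) \<in> Jr d r"

end

theory Submission
  imports Defs
begin

text \<open>Move v(m,m) to the right through the factors v(-m,-m) until it reaches \<one>, which it
  annihilates. Each exchange costs the commutator [v(m,m), v(-m,-m)]_r = 4m v(-m,m) + 2m^2 r;
  on v(-m,-m)^j \<one> the element v(-m,m) acts by 2mj, since it annihilates \<one> and has
  weight 2m against v(-m,-m), while the central 1 of L_r acts as the identity. Hence the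
  coefficient K_\<nu> obeys K_{\<nu>+1} = K_\<nu> + 8m^2\<nu> + 2m^2 r, whose solution with K_0 = 0
  is 2m^2\<nu>(r + 2\<nu> - 2).\<close>

lemma sand_word: "sand u (word v) w = word (u @ v @ w)"
  unfolding sand_def word_def by (auto intro!: ext)

lemma sand_plus: "sand u (\<lambda>z. X z + Y z) w = (\<lambda>z. sand u X w z + sand u Y w z)"
  unfolding sand_def by auto

lemma sand_minus: "sand u (\<lambda>z. X z - Y z) w = (\<lambda>z. sand u X w z - sand u Y w z)"
  unfolding sand_def by auto

lemma sand_scale: "sand u (\<lambda>z. c * X z) w = (\<lambda>z. c * sand u X w z)"
  unfolding sand_def by auto

lemma lin_plus: "lin (\<lambda>h. x h + y h) = (\<lambda>z. lin x z + lin y z)"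
  unfolding lin_def by (auto intro!: ext split: list.split)

lemma lin_scale: "lin (\<lambda>h. c * x h) = (\<lambda>z. c * lin x z)"
  unfolding lin_def by (auto intro!: ext split: list.split)

lemma lin_single: "lin (single g) = word [g]"
  unfolding lin_def single_def word_def by (auto intro!: ext split: list.split)

lemma Mr_eq_refl: "Mr_eq d r X X"
  unfolding Mr_eq_def using Jr.zero by simp

lemma Mr_eq_add:
  "Mr_eq d r X Y \<Longrightarrow> Mr_eq d r X' Y' \<Longrightarrow> Mr_eq d r (\<lambda>z. X z + X' z) (\<lambda>z. Y z + Y' z)"
  unfolding Mr_eq_def by (drule (1) Jr.add) (simp add: algebra_simps)

lemma Mr_eq_scale: "Mr_eq d r X Y \<Longrightarrow> Mr_eq d r (\<lambda>z. c * X z) (\<lambda>z. c * Y z)"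
  unfolding Mr_eq_def by (drule Jr.smult[where c = c]) (simp add: algebra_simps)

lemma Mr_eq_trans [trans]: "Mr_eq d r X Y \<Longrightarrow> Mr_eq d r Y Z \<Longrightarrow> Mr_eq d r X Z"
  unfolding Mr_eq_def by (drule (1) Jr.add) simp

lemma Mr_eq_swap:
  assumes "list_all (inL d) u" "list_all (inL d) w" "inL d a" "inL d b"
  shows "Mr_eq d r (word (u @ a # b # w))
           (\<lambda>z. word (u @ b # a # w) z + sand u (lin (bracket_r r a b)) w z)"
  using Jr.comm[OF assms, of r]
  by (simp add: Mr_eq_def sand_minus sand_plus sand_word algebra_simps)

lemma Mr_eq_annihilate:
  "list_all (inL d) u \<Longrightarrow> inBplus d b \<Longrightarrow> Mr_eq d r (word (u @ [b])) (\<lambda>z. 0 * word u z)"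
  using Jr.ann[of d u b r] by (simp add: Mr_eq_def sand_word)

lemma Mr_eq_unit:
  "list_all (inL d) u \<Longrightarrow> Mr_eq d r (word (u @ [Cst])) (\<lambda>z. 1 * word u z)"
  using Jr.cent[of d u r] by (simp add: Mr_eq_def sand_minus sand_word)

text \<open>In module terms: if a acts on \<one> by e and [a,b]_r = c b, then a acts on b^j \<one> by
  e + j c; the prefix u is carried along so that the induction can absorb one factor b into it.\<close>

lemma Mr_eq_weight:
  assumes "inL d a" "inL d b"
    and bracket: "bracket_r r a b = (\<lambda>h. c * single b h)"
    and eigen: "\<And>u. list_all (inL d) u \<Longrightarrow> Mr_eq d r (word (u @ [a])) (\<lambda>z. e * word u z)"
  shows "list_all (inL d) u \<Longrightarrow> Mr_eq d r (word (u @ a # replicate j b))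
           (\<lambda>z. (e + of_nat j * c) * word (u @ replicate j b) z)"
proof (induction j arbitrary: u)
  case 0
  then show ?case using eigen by simp
next
  case (Suc j)
  have ub: "list_all (inL d) (u @ [b])"
    using Suc.prems assms(2) by simp
  have "Mr_eq d r (word (u @ a # b # replicate j b))
          (\<lambda>z. word ((u @ [b]) @ a # replicate j b) z + c * word (u @ b # replicate j b) z)"
    using Mr_eq_swap[OF Suc.prems _ assms(1,2), of "replicate j b" r] assms(2)
    by (simp add: bracket lin_scale lin_single sand_scale sand_word list_all_iff)
  also have "Mr_eq d r \<dots>
          (\<lambda>z. (e + of_nat j * c) * word (u @ b # replicate j b) z + c * word (u @ b # replicate j b) z)"
    using Mr_eq_add[OF Suc.IH[OF ub] Mr_eq_refl] by simp
  finally show ?case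
    by (simp add: algebra_simps)
qed

lemma bracket_mixed_lower:
  "bracket_r r (Vb 1 1 (- m) m) (Vb 1 1 (- m) (- m))
     = (\<lambda>h. of_int (2 * m) * single (Vb 1 1 (- m) (- m)) h)"
  by (auto simp: fun_eq_iff bracket_r_def bracketA_def vexp_def dl_def single_def algebra_simps)

lemma bracket_Cst: "bracket_r r Cst b = (\<lambda>h. 0 * single b h)"
  by (simp add: fun_eq_iff bracket_r_def bracketA_def)

lemma inL_Vb_diag: "1 \<le> d \<Longrightarrow> p \<le> q \<Longrightarrow> inL d (Vb 1 1 p q)"
  by (simp add: inL_def inB_def)

lemma inBplus_Vb_diag: "1 \<le> d \<Longrightarrow> p \<le> q \<Longrightarrow> 0 \<le> q \<Longrightarrow> inBplus d (Vb 1 1 p q)"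
  by (simp add: inBplus_def inB_def)

context
  fixes d :: nat and m :: int
  assumes d_pos: "1 \<le> d" and m_pos: "0 < m"
begin

lemma bracket_raise_lower:
  "bracket_r r (Vb 1 1 m m) (Vb 1 1 (- m) (- m))
     = (\<lambda>h. of_int (4 * m) * single (Vb 1 1 (- m) m) h + 2 * of_int m ^ 2 * r * single Cst h)"
  using m_pos
  by (auto simp: fun_eq_iff bracket_r_def bracketA_def vexp_def dl_def single_def
      power2_eq_square algebra_simps)

lemma Mr_eq_mixed_lower_power:
  assumes "list_all (inL d) u"
  shows "Mr_eq d r (word (u @ Vb 1 1 (- m) m # replicate j (Vb 1 1 (- m) (- m))))
           (\<lambda>z. of_nat j * of_int (2 * m) * word (u @ replicate j (Vb 1 1 (- m) (- m))) z)"
proof -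
  have "Mr_eq d r (word (u @ Vb 1 1 (- m) m # replicate j (Vb 1 1 (- m) (- m))))
          (\<lambda>z. (0 + of_nat j * of_int (2 * m)) * word (u @ replicate j (Vb 1 1 (- m) (- m))) z)"
    using d_pos m_pos
    by (intro Mr_eq_weight[OF _ _ bracket_mixed_lower] Mr_eq_annihilate assms inL_Vb_diag
        inBplus_Vb_diag) simp_all
  then show ?thesis
    by simp
qed

lemma Mr_eq_Cst_lower_power:
  assumes "list_all (inL d) u"
  shows "Mr_eq d r (word (u @ Cst # replicate j (Vb 1 1 (- m) (- m))))
           (word (u @ replicate j (Vb 1 1 (- m) (- m))))"
proof -
  have "Mr_eq d r (word (u @ Cst # replicate j (Vb 1 1 (- m) (- m))))
          (\<lambda>z. (1 + of_nat j * 0) * word (u @ replicate j (Vb 1 1 (- m) (- m))) z)"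
    using d_pos
    by (intro Mr_eq_weight[OF _ _ bracket_Cst] Mr_eq_unit assms inL_Vb_diag) (simp_all add: inL_def)
  then show ?thesis
    by simp
qed

lemma Mr_eq_raise_lower_power:
  "list_all (inL d) u \<Longrightarrow> Mr_eq d r (word (u @ Vb 1 1 m m # replicate \<nu> (Vb 1 1 (- m) (- m))))
     (\<lambda>z. 2 * of_int m ^ 2 * of_nat \<nu> * (r + 2 * of_nat \<nu> - 2)
           * word (u @ replicate (\<nu> - 1) (Vb 1 1 (- m) (- m))) z)"
proof (induction \<nu> arbitrary: u)
  case 0
  show ?case
    using Mr_eq_annihilate[OF 0 inBplus_Vb_diag, of m m r] d_pos m_pos by simp
next
  case (Suc j)
  let ?A = "Vb 1 1 m m" and ?B = "Vb 1 1 (- m) (- m)" and ?V = "Vb 1 1 (- m) m"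
  let ?K = "\<lambda>j. 2 * of_int m ^ 2 * of_nat j * (r + 2 * of_nat j - 2) :: complex"
  have B: "inL d ?B"
    by (rule inL_Vb_diag[OF d_pos]) simp
  have "Mr_eq d r (word (u @ ?A # ?B # replicate j ?B))
          (\<lambda>z. word ((u @ [?B]) @ ?A # replicate j ?B) z
             + of_int (4 * m) * word (u @ ?V # replicate j ?B) z
             + 2 * of_int m ^ 2 * r * word (u @ Cst # replicate j ?B) z)"
    using Mr_eq_swap[OF Suc.prems _ inL_Vb_diag B, of "replicate j ?B" m m r,
        unfolded bracket_raise_lower] d_pos B
    by (simp only: lin_plus lin_scale lin_single sand_plus sand_scale sand_word)
      (simp add: list_all_iff algebra_simps)
  also have "Mr_eq d r \<dots>
          (\<lambda>z. ?K j * word ((u @ [?B]) @ replicate (j - 1) ?B) z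
             + of_int (4 * m) * (of_nat j * of_int (2 * m) * word (u @ replicate j ?B) z)
             + 2 * of_int m ^ 2 * r * word (u @ replicate j ?B) z)"
    using Suc.prems B
    by (intro Mr_eq_add Mr_eq_scale Suc.IH Mr_eq_mixed_lower_power Mr_eq_Cst_lower_power) simp_all
  also have "\<dots> = (\<lambda>z. ?K (Suc j) * word (u @ replicate (Suc j - 1) ?B) z)"
  proof (cases j)
    case (Suc k)
    then have "(u @ [?B]) @ replicate (j - 1) ?B = u @ replicate j ?B"
      by (simp add: replicate_append_same)
    then show ?thesis
      by (simp add: fun_eq_iff algebra_simps power2_eq_square)
  qed (simp add: fun_eq_iff algebra_simps)
  finally show ?case
    by simp
qed

end

theorem lemma5p3:
  fixes d :: nat and r :: complex and m :: int and \<nu> :: nat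
  assumes "2 \<le> d" and "0 < m"
  shows "Mr_eq d r
           (word (Vb 1 1 m m # replicate \<nu> (Vb 1 1 (- m) (- m))))
           (\<lambda>z. 2 * of_int m ^ 2 * of_nat \<nu> * (r + 2 * of_nat \<nu> - 2)
                 * word (replicate (\<nu> - 1) (Vb 1 1 (- m) (- m))) z)"
  using Mr_eq_raise_lower_power[of d m "[]" r \<nu>] assms by simp

end
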